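(* In the two-type setting, define $\bar h:\mathbb R\times[0,1]\to\mathbb R\times[0,1]$ by $\bar h(p)=\big(\phi_1p_1\psi(\beta_2p_2),\,h_2(0,p_2)\big)$. Then for every fixed $k\in\mathbb N$, $$\lim_{p_1\to0^+}\frac{\bar h^k_1(p)}{h^k_1(p)}=1\qquad\text{uniformly in }p_2\in[0,1],$$ where $\bar h^k_1$ and $h^k_1$ denote the first coordinates of the $k$-th iterates of $\bar h$ and $h$.
   Context: Two-type limiting map: $\beta_1,\beta_2>0$, $\alpha(1),\alpha(2)\in[0,1)$, $\phi_i=(1-\alpha(i))\beta_i$. For $p\in[0,1]^2$, $S(p)=\beta_1p_1+\beta_2p_2$ and $f^{(i)}(p)=(1-e^{-S(p)})\beta_ip_i/S(p)$ ($=0$ if $S(p)=0$). For $\alpha\in(0,1)$ let $g_\alpha(x)=\frac{(1-\sqrt{1-4(1-\alpha)x(1-x)})^3}{8(1-\alpha)^2x^2}$ for $x\in(0,1]$ and $g_\alpha(0)=0$; let $g_0(x)=x$ for $x\le1/2$ and $g_0(x)=(1-x)^3/x^2$ for $x>1/2$. $h(p)=(h_1(p),h_2(p))$ with $h_i(p)=g_{\alpha(i)}(f^{(i)}(p))$. $\psi(x)=(1-e^{-x})/x$, $\psi(0)=1$. *)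

theory Defs
  imports "HOL-Analysis.Analysis"
begin

text \<open>Two-type limiting map. Points p are pairs (p1, p2). Parameters: b1 b2 (the betas),
  a1 a2 (alpha(1), alpha(2)).\<close>

definition S2 :: "real \<Rightarrow> real \<Rightarrow> real \<times> real \<Rightarrow> real" where
  "S2 b1 b2 p = b1 * fst p + b2 * snd p"

definition f1 :: "real \<Rightarrow> real \<Rightarrow> real \<times> real \<Rightarrow> real" where
  "f1 b1 b2 p = (if S2 b1 b2 p = 0 then 0
     else (1 - exp (- S2 b1 b2 p)) * b1 * fst p / S2 b1 b2 p)"

definition f2 :: "real \<Rightarrow> real \<Rightarrow> real \<times> real \<Rightarrow> real" where
  "f2 b1 b2 p = (if S2 b1 b2 p = 0 then 0
     else (1 - exp (- S2 b1 b2 p)) * b2 * snd p / S2 b1 b2 p)"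

definition g :: "real \<Rightarrow> real \<Rightarrow> real" where
  "g a x = (if a = 0 then (if x \<le> 1/2 then x else (1 - x)^3 / x^2)
     else (if x = 0 then 0
           else (1 - sqrt (1 - 4 * (1 - a) * x * (1 - x)))^3 / (8 * (1 - a)^2 * x^2)))"

definition hmap :: "real \<Rightarrow> real \<Rightarrow> real \<Rightarrow> real \<Rightarrow> real \<times> real \<Rightarrow> real \<times> real" where
  "hmap b1 b2 a1 a2 p = (g a1 (f1 b1 b2 p), g a2 (f2 b1 b2 p))"

definition psi :: "real \<Rightarrow> real" where
  "psi x = (if x = 0 then 1 else (1 - exp (- x)) / x)"

text \<open>hbar(p) = (phi_1 p1 psi(beta_2 p2), h_2(0, p2)), with phi_1 = (1 - alpha(1)) beta_1.\<close>
definition hbar :: "real \<Rightarrow> real \<Rightarrow> real \<Rightarrow> real \<Rightarrow> real \<times> real \<Rightarrow> real \<times> real" where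
  "hbar b1 b2 a1 a2 p = ((1 - a1) * b1 * fst p * psi (b2 * snd p),
                         snd (hmap b1 b2 a1 a2 (0, snd p)))"

end

theory Submission
  imports Defs
begin

text \<open>
  On the closed quadrant the first coordinate factors out of both maps: writing
  \<open>g a x = x * G a x\<close> with \<open>G a\<close> continuous, one gets \<open>h p = (p\<^sub>1 * A p, B p)\<close> with
  \<open>A\<close> continuous and positive, and \<open>hbar p = (p\<^sub>1 * A (0, p\<^sub>2), B (0, p\<^sub>2))\<close>. So for
  \<open>p\<^sub>1 > 0\<close> the quotient of the first coordinates of the \<open>k\<close>-th iterates is a quotient of
  products of \<open>A\<close> along the two orbits, a function that is continuous on the whole quadrant.
  The two maps agree on the invariant axis \<open>p\<^sub>1 = 0\<close>, where this function is \<open>1\<close>;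
  uniform continuity on \<open>[0,1]\<^sup>2\<close> gives the uniform limit.
\<close>

lemma isCont_psi: "isCont psi x"
proof (cases "x = 0")
  case True
  have "((\<lambda>y. 1 - exp (- y)) has_field_derivative 1) (at (0::real))"
    by (auto intro!: derivative_eq_intros)
  then have "((\<lambda>y. (1 - exp (- y)) / y) \<longlongrightarrow> 1) (at (0::real))"
    by (simp add: has_field_derivative_iff)
  then have "(psi \<longlongrightarrow> 1) (at 0)"
    by (rule tendsto_cong[THEN iffD1, rotated]) (auto simp: psi_def eventually_at_filter)
  with True show ?thesis
    by (simp add: isCont_def psi_def)
next
  case False
  have psi_near_x: "eventually (\<lambda>y. psi y = (1 - exp (- y)) / y) (nhds x)"
    using t1_space_nhds[OF False] by eventually_elim (simp add: psi_def)
  have "isCont (\<lambda>y. (1 - exp (- y)) / y) x"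
    using False by (auto intro!: continuous_intros)
  then show ?thesis
    by (simp add: isCont_cong[OF psi_near_x])
qed

lemma continuous_on_psi [continuous_intros]:
  "continuous_on S f \<Longrightarrow> continuous_on S (\<lambda>x. psi (f x))"
  by (rule continuous_on_compose2[OF continuous_at_imp_continuous_on[OF ballI[OF isCont_psi]]]) auto

lemma psi_pos: "psi x > 0"
  by (cases x "0::real" rule: linorder_cases) (auto simp: psi_def divide_neg_neg)

lemma mult_psi_bounds:
  assumes "0 \<le> y" "y \<le> x"
  shows "0 \<le> y * psi x \<and> y * psi x < 1"
proof (cases "x = 0")
  case False
  then have "x > 0" using assms by simp
  have "y * psi x = (1 - exp (- x)) * (y / x)"
    using \<open>x > 0\<close> by (simp add: psi_def)
  also have "\<dots> \<le> 1 - exp (- x)"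
    using \<open>x > 0\<close> assms by (intro mult_left_le) auto
  also have "\<dots> < 1" by simp
  finally show ?thesis
    using assms psi_pos[of x] by (simp add: less_imp_le)
qed (use assms in auto)

text \<open>
  Rationalising \<open>1 - sqrt (1 - D) = D / (1 + sqrt (1 - D))\<close> in the closed form of \<open>g a\<close>
  gives \<open>g a x = x * g_slope a x\<close>, and unlike \<open>g a\<close> the factor is continuous at \<open>0\<close>.
  The \<open>max 0\<close> only keeps the denominator positive outside \<open>[0,1]\<close>.
\<close>

definition g_slope :: "real \<Rightarrow> real \<Rightarrow> real" where
  "g_slope a x = 8 * (1 - a) * (1 - x)^3 / (1 + sqrt (max 0 (1 - 4 * (1 - a) * x * (1 - x))))^3"

lemma continuous_on_g_slope [continuous_intros]:
  "continuous_on S f \<Longrightarrow> continuous_on S (\<lambda>x. g_slope a (f x))"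
  unfolding g_slope_def
  by (intro continuous_intros) (auto simp: add_nonneg_eq_0_iff)

lemma g_slope_pos: "x < 1 \<Longrightarrow> a < 1 \<Longrightarrow> g_slope a x > 0"
  unfolding g_slope_def by (intro divide_pos_pos) (auto intro: add_pos_nonneg)

lemma g_slope_at_0: "g_slope a 0 = 1 - a"
  by (simp add: g_slope_def)

lemma g_0_eq:
  assumes "0 < x"
  shows "g 0 x = (1 - sqrt (1 - 4 * x * (1 - x)))^3 / (8 * x^2)"
proof -
  have "sqrt (1 - 4 * x * (1 - x)) = \<bar>1 - 2 * x\<bar>"
    by (simp add: real_sqrt_abs[symmetric] power2_eq_square algebra_simps)
  with assms show ?thesis
    by (auto simp: g_def abs_if power2_eq_square power3_eq_cube field_simps)
qed

lemma g_eq_mult_g_slope: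
  assumes "0 \<le> a" "a < 1" "0 \<le> x" "x \<le> 1"
  shows "g a x = x * g_slope a x"
proof (cases "x = 0")
  case False
  define D where "D = 4 * (1 - a) * x * (1 - x)"
  define s where "s = sqrt (1 - D)"
  have "4 * x * (1 - x) \<le> 1"
    using zero_le_power2[of "2 * x - 1"] by (simp add: power2_eq_square algebra_simps)
  moreover have "(1 - a) * (4 * x * (1 - x)) \<le> 4 * x * (1 - x)"
    using assms by (intro mult_left_le_one_le) auto
  ultimately have "D \<le> 1" by (simp add: D_def algebra_simps)
  then have "s \<ge> 0" "s^2 = 1 - D" by (simp_all add: s_def)
  then have rationalised: "1 - s = D / (1 + s)"
    by (simp add: field_simps power2_eq_square)
  have "D^3 = x * (8 * (1 - a) * (1 - x)^3) * (8 * (1 - a)^2 * x^2)"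
    by (simp add: D_def power2_eq_square power3_eq_cube algebra_simps)
  have "g a x = (1 - s)^3 / (8 * (1 - a)^2 * x^2)"
    using False assms g_0_eq[of x] by (auto simp: g_def s_def D_def)
  also have "\<dots> = D^3 / ((1 + s)^3 * (8 * (1 - a)^2 * x^2))"
    by (simp add: rationalised power_divide)
  also have "\<dots> = x * (8 * (1 - a) * (1 - x)^3 / (1 + s)^3)"
    using \<open>D^3 = _\<close> False assms by simp
  also have "\<dots> = x * g_slope a x"
    using \<open>D \<le> 1\<close> by (simp add: g_slope_def s_def D_def)
  finally show ?thesis .
qed (simp add: g_def)

lemma funpow_in_invariant: "T ` D \<subseteq> D \<Longrightarrow> p \<in> D \<Longrightarrow> (T ^^ k) p \<in> D"
  by (induction k) auto

lemma continuous_on_funpow: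
  assumes "continuous_on D T" "T ` D \<subseteq> D"
  shows "continuous_on D (T ^^ k)"
proof (induction k)
  case (Suc k)
  then show ?case
    using assms funpow_in_invariant[OF assms(2)]
    by (auto intro: continuous_on_compose2[OF assms(1)])
qed (simp add: continuous_on_id)

lemma funpow_eq_on_invariant:
  assumes "T ` Z \<subseteq> Z" "\<And>p. p \<in> Z \<Longrightarrow> U p = T p" "p \<in> Z"
  shows "(U ^^ k) p = (T ^^ k) p"
  using funpow_in_invariant[OF assms(1) assms(3)] assms(2)
  by (induction k) auto

lemma fst_funpow_eq_prod:
  fixes T :: "'a::comm_monoid_mult \<times> 'b \<Rightarrow> 'a \<times> 'b"
  assumes "T ` D \<subseteq> D" "\<And>p. p \<in> D \<Longrightarrow> fst (T p) = fst p * A p" "p \<in> D"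
  shows "fst ((T ^^ k) p) = fst p * (\<Prod>j<k. A ((T ^^ j) p))"
  using funpow_in_invariant[OF assms(1) assms(3)] assms(2)
  by (induction k) (auto simp: mult_ac)

lemma uniform_limit_at_right_0_of_continuous_on_Times:
  fixes F :: "real \<times> 'a::metric_space \<Rightarrow> 'b::metric_space"
  assumes "compact K" "c > 0" "continuous_on ({0..c} \<times> K) F"
  shows "uniform_limit K (\<lambda>y q. F (y, q)) (\<lambda>q. F (0, q)) (at_right 0)"
  unfolding uniform_limit_iff
proof (intro allI impI)
  fix e :: real
  assume "e > 0"
  have "uniformly_continuous_on ({0..c} \<times> K) F"
    using assms by (intro compact_uniformly_continuous compact_Times) auto
  with \<open>e > 0\<close> obtain d where "d > 0" and d: "\<And>x x'. x \<in> {0..c} \<times> K \<Longrightarrow> x' \<in> {0..c} \<times> K \<Longrightarrow>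
      dist x' x < d \<Longrightarrow> dist (F x') (F x) < e"
    unfolding uniformly_continuous_on_def by metis
  have "eventually (\<lambda>y. 0 < y \<and> y < min c d) (at_right (0::real))"
    using \<open>d > 0\<close> \<open>c > 0\<close> by (simp add: eventually_at_right_field) (metis min_less_iff_conj)
  then show "eventually (\<lambda>y. \<forall>q\<in>K. dist (F (y, q)) (F (0, q)) < e) (at_right 0)"
  proof eventually_elim
    case (elim y)
    then show ?case
      using \<open>c > 0\<close> by (auto intro!: d simp: dist_Pair_Pair dist_real_def)
  qed
qed

abbreviation quadrant :: "(real \<times> real) set" where
  "quadrant \<equiv> {0..} \<times> {0..}"

locale two_type_parameters =
  fixes b1 b2 a1 a2 :: real
  assumes b1_pos: "b1 > 0" and b2_pos: "b2 > 0"
    and a1_nonneg: "0 \<le> a1" and a1_less_1: "a1 < 1"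
    and a2_nonneg: "0 \<le> a2" and a2_less_1: "a2 < 1"
begin

definition h1_factor :: "real \<times> real \<Rightarrow> real" where
  "h1_factor p = b1 * psi (S2 b1 b2 p) * g_slope a1 (b1 * fst p * psi (S2 b1 b2 p))"

definition h2 :: "real \<times> real \<Rightarrow> real" where
  "h2 p = b2 * snd p * psi (S2 b1 b2 p) * g_slope a2 (b2 * snd p * psi (S2 b1 b2 p))"

lemma continuous_on_h1_factor [continuous_intros]:
  "continuous_on S f \<Longrightarrow> continuous_on S (\<lambda>x. h1_factor (f x))"
  unfolding h1_factor_def S2_def by (intro continuous_intros)

lemma continuous_on_h2 [continuous_intros]:
  "continuous_on S f \<Longrightarrow> continuous_on S (\<lambda>x. h2 (f x))"
  unfolding h2_def S2_def by (intro continuous_intros)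

lemma S2_bounds:
  assumes "p \<in> quadrant"
  shows "0 \<le> b1 * fst p" "b1 * fst p \<le> S2 b1 b2 p" "0 \<le> b2 * snd p" "b2 * snd p \<le> S2 b1 b2 p"
  using assms b1_pos b2_pos by (auto simp: S2_def mem_Times_iff)

lemma f1_eq: "p \<in> quadrant \<Longrightarrow> f1 b1 b2 p = b1 * fst p * psi (S2 b1 b2 p)"
  using S2_bounds[of p] by (auto simp: f1_def psi_def)

lemma f2_eq: "p \<in> quadrant \<Longrightarrow> f2 b1 b2 p = b2 * snd p * psi (S2 b1 b2 p)"
  using S2_bounds[of p] by (auto simp: f2_def psi_def)

lemma f1_bounds: "p \<in> quadrant \<Longrightarrow> 0 \<le> f1 b1 b2 p \<and> f1 b1 b2 p < 1"
  using f1_eq mult_psi_bounds S2_bounds by simp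

lemma f2_bounds: "p \<in> quadrant \<Longrightarrow> 0 \<le> f2 b1 b2 p \<and> f2 b1 b2 p < 1"
  using f2_eq mult_psi_bounds S2_bounds by simp

lemma h1_factor_pos: "p \<in> quadrant \<Longrightarrow> h1_factor p > 0"
  using f1_bounds[of p] f1_eq[of p] b1_pos a1_less_1 psi_pos
  unfolding h1_factor_def by (intro mult_pos_pos g_slope_pos) auto

lemma h2_nonneg: "p \<in> quadrant \<Longrightarrow> h2 p \<ge> 0"
  using f2_bounds[of p] f2_eq[of p] g_slope_pos[of "f2 b1 b2 p" a2] a2_less_1
  unfolding h2_def by auto

lemma hmap_eq: "p \<in> quadrant \<Longrightarrow> hmap b1 b2 a1 a2 p = (fst p * h1_factor p, h2 p)"
  using f1_bounds[of p] f2_bounds[of p] f1_eq[of p] f2_eq[of p]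
    a1_nonneg a1_less_1 a2_nonneg a2_less_1
  unfolding hmap_def h1_factor_def h2_def by (simp add: g_eq_mult_g_slope mult_ac)

lemma hbar_eq: "p \<in> quadrant \<Longrightarrow> hbar b1 b2 a1 a2 p = (fst p * h1_factor (0, snd p), h2 (0, snd p))"
  using hmap_eq[of "(0, snd p)"]
  unfolding hbar_def h1_factor_def by (auto simp: g_slope_at_0 S2_def mem_Times_iff mult_ac)

lemma hmap_quadrant: "hmap b1 b2 a1 a2 ` quadrant \<subseteq> quadrant"
proof (rule image_subsetI)
  fix p assume p: "p \<in> quadrant"
  then have "fst p * h1_factor p \<ge> 0"
    using h1_factor_pos[OF p] by (simp add: mem_Times_iff)
  with p h2_nonneg[OF p] show "hmap b1 b2 a1 a2 p \<in> quadrant"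
    by (simp add: hmap_eq)
qed

lemma hbar_quadrant: "hbar b1 b2 a1 a2 ` quadrant \<subseteq> quadrant"
proof (rule image_subsetI)
  fix p assume p: "p \<in> quadrant"
  then have axis: "(0, snd p) \<in> quadrant"
    by (simp add: mem_Times_iff)
  with p have "fst p * h1_factor (0, snd p) \<ge> 0"
    using h1_factor_pos[OF axis] by (simp add: mem_Times_iff)
  with p h2_nonneg[OF axis] show "hbar b1 b2 a1 a2 p \<in> quadrant"
    by (simp add: hbar_eq)
qed

lemma continuous_on_hmap: "continuous_on quadrant (hmap b1 b2 a1 a2)"
proof -
  have "continuous_on quadrant (\<lambda>p. (fst p * h1_factor p, h2 p))"
    by (intro continuous_intros)
  then show ?thesis
    by (rule continuous_on_eq) (simp add: hmap_eq)
qed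

lemma continuous_on_hbar: "continuous_on quadrant (hbar b1 b2 a1 a2)"
proof -
  have "continuous_on quadrant (\<lambda>p. (fst p * h1_factor (0, snd p), h2 (0, snd p)))"
    by (intro continuous_intros)
  then show ?thesis
    by (rule continuous_on_eq) (simp add: hbar_eq)
qed

lemma hmap_axis: "hmap b1 b2 a1 a2 ` ({0} \<times> {0..}) \<subseteq> {0} \<times> {0..}"
  using hmap_eq h2_nonneg by (auto simp: mem_Times_iff)

lemma hbar_eq_hmap_on_axis: "p \<in> {0} \<times> {0..} \<Longrightarrow> hbar b1 b2 a1 a2 p = hmap b1 b2 a1 a2 p"
  by (auto simp: hmap_eq hbar_eq)

definition iterate_ratio :: "nat \<Rightarrow> real \<times> real \<Rightarrow> real" where
  "iterate_ratio k p = (\<Prod>j<k. h1_factor (0, snd ((hbar b1 b2 a1 a2 ^^ j) p)))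
     / (\<Prod>j<k. h1_factor ((hmap b1 b2 a1 a2 ^^ j) p))"

lemma fst_iterates_quotient:
  assumes "p \<in> quadrant" "fst p \<noteq> 0"
  shows "fst ((hbar b1 b2 a1 a2 ^^ k) p) / fst ((hmap b1 b2 a1 a2 ^^ k) p) = iterate_ratio k p"
  using fst_funpow_eq_prod[OF hbar_quadrant _ assms(1), of "\<lambda>p. h1_factor (0, snd p)" k]
    fst_funpow_eq_prod[OF hmap_quadrant _ assms(1), of h1_factor k] assms(2)
  by (simp add: hbar_eq hmap_eq iterate_ratio_def)

lemma prod_h1_factor_hmap_pos:
  "p \<in> quadrant \<Longrightarrow> (\<Prod>j<k. h1_factor ((hmap b1 b2 a1 a2 ^^ j) p)) > 0"
  using h1_factor_pos funpow_in_invariant[OF hmap_quadrant] by (intro prod_pos) auto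

lemma continuous_on_iterate_ratio: "continuous_on quadrant (iterate_ratio k)"
  using continuous_on_funpow[OF continuous_on_hmap hmap_quadrant]
    continuous_on_funpow[OF continuous_on_hbar hbar_quadrant]
    prod_h1_factor_hmap_pos[THEN less_imp_neq, THEN not_sym]
  unfolding iterate_ratio_def by (intro continuous_intros) (auto simp del: prod_zero_iff)

lemma iterate_ratio_axis:
  assumes "0 \<le> q"
  shows "iterate_ratio k (0, q) = 1"
proof -
  have "(hbar b1 b2 a1 a2 ^^ j) (0, q) = (hmap b1 b2 a1 a2 ^^ j) (0, q)
        \<and> (hmap b1 b2 a1 a2 ^^ j) (0, q) \<in> {0} \<times> {0..}" for j
    using funpow_eq_on_invariant[OF hmap_axis hbar_eq_hmap_on_axis]
      funpow_in_invariant[OF hmap_axis] assms by simp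
  then have "(0, snd ((hbar b1 b2 a1 a2 ^^ j) (0, q))) = (hmap b1 b2 a1 a2 ^^ j) (0, q)" for j
    by (metis mem_Times_iff prod.collapse singletonD)
  moreover have "(\<Prod>j<k. h1_factor ((hmap b1 b2 a1 a2 ^^ j) (0, q))) > 0"
    using prod_h1_factor_hmap_pos assms by simp
  ultimately show ?thesis
    by (simp add: iterate_ratio_def del: prod_zero_iff)
qed

end

theorem mainTheorem17:
  fixes b1 b2 a1 a2 :: real and k :: nat
  assumes "b1 > 0" "b2 > 0" "0 \<le> a1" "a1 < 1" "0 \<le> a2" "a2 < 1"
  shows "uniform_limit {0..1}
           (\<lambda>p1 p2. fst ((hbar b1 b2 a1 a2 ^^ k) (p1, p2)) / fst ((hmap b1 b2 a1 a2 ^^ k) (p1, p2)))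
           (\<lambda>_. 1) (at_right 0)"
proof -
  interpret two_type_parameters b1 b2 a1 a2
    using assms by unfold_locales
  have lim: "uniform_limit {0..1} (\<lambda>y q. iterate_ratio k (y, q)) (\<lambda>q. iterate_ratio k (0, q)) (at_right 0)"
    by (rule uniform_limit_at_right_0_of_continuous_on_Times[where c = 1])
      (auto intro: continuous_on_subset[OF continuous_on_iterate_ratio])
  have ratio_eq_quotient: "eventually (\<lambda>y. \<forall>q\<in>{0..1}. iterate_ratio k (y, q) =
      fst ((hbar b1 b2 a1 a2 ^^ k) (y, q)) / fst ((hmap b1 b2 a1 a2 ^^ k) (y, q))) (at_right 0)"
    using fst_iterates_quotient by (auto simp: eventually_at_filter)
  show ?thesis
    using lim uniform_limit_cong[OF ratio_eq_quotient, of "\<lambda>q. iterate_ratio k (0, q)" "\<lambda>_. 1"]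
      iterate_ratio_axis by simp
qed

end
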